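(* Let $\{\mathbb{P}_{s,t}:0\le s\le t\}$ and $\{\mathbb{P}'_{s,t}:0\le s\le t\}$ be polynomial processes, each having the harness property (i.e. there exist $\mathbb{X},\mathbb{X}'\in\mathcal{Q}$ with $\mathbb{P}_{0,t}\mathbb{F}=(\mathbb{F}+t\mathbb{X})\mathbb{P}_{0,t}$ and $\mathbb{P}'_{0,t}\mathbb{F}=(\mathbb{F}+t\mathbb{X}')\mathbb{P}'_{0,t}$ for all $t\ge0$). If their infinitesimal generators coincide, $\mathbb{A}_t=\mathbb{A}'_t$ for all $t>0$, then $\mathbb{P}_{s,t}=\mathbb{P}'_{s,t}$ for all $0\le s\le t$. That is, a polynomial process with the harness property is uniquely determined by its generator.
   Context: $\mathcal{Q}$ denotes the real linear space of all infinite sequences $\mathbb{P}=(p_0,p_1,\dots)$ of real polynomials in $x$, with product $\mathbb{P}\mathbb{Q}=\mathbb{R}=(r_0,r_1,\dots)$, $r_k(x)=\sum_{j=0}^{\deg q_k}[q_k]_j\,p_j(x)$ for $\mathbb{Q}=(q_0,q_1,\dots)$, where $[q]_j$ is the coefficient of $x^j$ in $q$ (this corresponds to composition of linear maps of the polynomial space, a map $\mathsf{P}$ being identified with $(\mathsf{P}(1),\mathsf{P}(x),\mathsf{P}(x^2),\dots)$). Special elements: $\mathbb{E}=(1,x,x^2,\dots)$ (identity), $\mathbb{F}=(x,x^2,\dots)$, $\mathbb{D}=(0,1,x,x^2,\dots)$. A polynomial process is a family $\{\mathbb{P}_{s,t}\in\mathcal{Q}:0\le s\le t\}$ with: (i)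 the $n$-th component of $\mathbb{P}_{s,t}$ is a polynomial of degree exactly $n$ for every $n\ge0$; (ii) $\mathbb{P}_{s,t}(\mathbb{E}-\mathbb{F}\mathbb{D})=\mathbb{E}-\mathbb{F}\mathbb{D}$; (iii) $\mathbb{P}_{s,t}\mathbb{P}_{t,u}=\mathbb{P}_{s,u}$ for $0\le s\le t\le u$. Its infinitesimal generator is $\mathbb{A}_t=\lim_{h\to0^+}\frac1h(\mathbb{P}_{t-h,t}-\mathbb{E})$, $t>0$, limit taken coefficientwise (it exists under the harness property). *)

theory Defs
  imports "HOL-Analysis.Analysis" "HOL-Computational_Algebra.Polynomial"
begin

type_synonym qseq = "nat \<Rightarrow> real poly"

definition qmult :: "qseq \<Rightarrow> qseq \<Rightarrow> qseq" (infixl "\<star>" 70) where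
  "qmult P Q = (\<lambda>k. \<Sum>j\<le>degree (Q k). smult (coeff (Q k) j) (P j))"

definition qadd :: "qseq \<Rightarrow> qseq \<Rightarrow> qseq" where
  "qadd P Q = (\<lambda>n. P n + Q n)"
definition qsub :: "qseq \<Rightarrow> qseq \<Rightarrow> qseq" where
  "qsub P Q = (\<lambda>n. P n - Q n)"
definition qscale :: "real \<Rightarrow> qseq \<Rightarrow> qseq" where
  "qscale c P = (\<lambda>n. smult c (P n))"

definition qE :: qseq where "qE = (\<lambda>n. monom 1 n)"
definition qF :: qseq where "qF = (\<lambda>n. monom 1 (Suc n))"
definition qD :: qseq where "qD = (\<lambda>n. if n = 0 then 0 else monom 1 (n - 1))"

text \<open>Polynomial process: P s t is only meaningful for 0 \<le> s \<le> t.\<close>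
definition polynomial_process :: "(real \<Rightarrow> real \<Rightarrow> qseq) \<Rightarrow> bool" where
  "polynomial_process P \<longleftrightarrow>
     (\<forall>s t. 0 \<le> s \<and> s \<le> t \<longrightarrow>
        (\<forall>n. P s t n \<noteq> 0 \<and> degree (P s t n) = n) \<and>
        P s t \<star> qsub qE (qF \<star> qD) = qsub qE (qF \<star> qD)) \<and>
     (\<forall>s t u. 0 \<le> s \<and> s \<le> t \<and> t \<le> u \<longrightarrow> P s t \<star> P t u = P s u)"

definition harness :: "(real \<Rightarrow> real \<Rightarrow> qseq) \<Rightarrow> bool" where
  "harness P \<longleftrightarrow> (\<exists>X. \<forall>t\<ge>0. P 0 t \<star> qF = qadd qF (qscale t X) \<star> P 0 t)"

text \<open>Infinitesimal generator, coefficientwise: generator P t n j is the coefficient of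
  x^j in the n-th component of A_t = lim_{h\<rightarrow>0+} (P_{t-h,t} - E)/h.\<close>
definition generator :: "(real \<Rightarrow> real \<Rightarrow> qseq) \<Rightarrow> real \<Rightarrow> nat \<Rightarrow> nat \<Rightarrow> real" where
  "generator P t = (\<lambda>n j. Lim (at_right 0) (\<lambda>h. coeff (P (t - h) t n - qE n) j / h))"

end

theory Submission
  imports Defs
begin

text \<open>
  Composing with \<open>P_{0,s}\<close> and cancelling (the components of \<open>P_{0,s}\<close> form a triangular
  basis) reduces the claim to \<open>P_{0,t} = P'_{0,t}\<close>. The harness relation expresses
  \<open>P_{0,t}(x^{n+1})\<close> through the \<open>P_{0,t}(x^j)\<close>, \<open>j \<le> n\<close>, with coefficients affine in \<open>t\<close>,
  so every coefficient of \<open>P_{0,t}(x^n)\<close> is a polynomial in \<open>t\<close>. Differentiating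
  \<open>P_{0,t} = P_{0,t-h} P_{t-h,t}\<close> from the left gives the forward equation
  \<open>d/dt P_{0,t} = P_{0,t} A_t\<close>; the limits defining \<open>A_t\<close> exist because this triangular system
  can be solved for them by back substitution. By induction on \<open>n\<close>, the difference of the
  \<open>n\<close>-th components of the two processes and the leading coefficient of \<open>P_{0,t}(x^n)\<close> solve
  the same scalar equation \<open>y' = A_t(n,n) y\<close>; their quotient is therefore constant, and it
  vanishes at \<open>t = 0\<close>.
\<close>

definition qapply :: "qseq \<Rightarrow> real poly \<Rightarrow> real poly" where
  "qapply A p = (\<Sum>j\<le>degree p. smult (coeff p j) (A j))"

definition qtriangular :: "qseq \<Rightarrow> bool" where
  "qtriangular A \<longleftrightarrow> (\<forall>j. A j \<noteq> 0 \<and> degree (A j) = j)"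

lemma qmult_apply: "(A \<star> B) k = qapply A (B k)"
  by (simp add: qmult_def qapply_def)

lemma qapply_eq_sum_atMost:
  assumes "degree p \<le> N"
  shows "qapply A p = (\<Sum>j\<le>N. smult (coeff p j) (A j))"
  unfolding qapply_def
  by (rule sum.mono_neutral_left) (use assms in \<open>auto simp: coeff_eq_0\<close>)

lemma coeff_qmult:
  assumes "degree (B k) \<le> N"
  shows "coeff ((A \<star> B) k) i = (\<Sum>j\<le>N. coeff (B k) j * coeff (A j) i)"
  by (simp add: qmult_apply qapply_eq_sum_atMost[OF assms] coeff_sum)

lemma qapply_diff: "qapply A (p - q) = qapply A p - qapply A q"
proof -
  let ?N = "max (degree p) (degree q)"
  have "degree (p - q) \<le> ?N"
    by (simp add: degree_diff_le)
  then show ?thesis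
    by (simp add: qapply_eq_sum_atMost[of _ ?N] sum_subtractf[symmetric] smult_diff_left)
qed

lemma qapply_eq_0_imp:
  assumes "qtriangular A" and "qapply A p = 0"
  shows "p = 0"
proof (rule ccontr)
  assume "p \<noteq> 0"
  define d where "d = degree p"
  have "coeff (qapply A p) d = (\<Sum>j\<le>d. coeff p j * coeff (A j) d)"
    by (simp add: qapply_def d_def coeff_sum)
  also have "\<dots> = coeff p d * coeff (A d) d"
    using assms(1) unfolding qtriangular_def
    by (subst sum.remove[of _ d]) (auto intro!: sum.neutral coeff_eq_0 simp: le_less)
  also have "\<dots> \<noteq> 0"
    using \<open>p \<noteq> 0\<close> assms(1) unfolding qtriangular_def d_def
    by (metis leading_coeff_0_iff mult_eq_0_iff)
  finally show False
    using assms(2) by simp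
qed

lemma qmult_left_cancel:
  assumes "qtriangular A" and "A \<star> B = A \<star> C"
  shows "B = C"
proof
  fix k
  have "qapply A (B k - C k) = 0"
    using assms(2) by (simp add: qapply_diff flip: qmult_apply)
  then show "B k = C k"
    using qapply_eq_0_imp[OF assms(1), of "B k - C k"] by simp
qed

lemma qmult_qE_right: "A \<star> qE = A"
  unfolding qmult_def qE_def
  by (simp add: coeff_monom degree_monom_eq if_distrib[of "\<lambda>c. smult c _"] cong: if_cong)

lemma qmult_qF_right: "(A \<star> qF) n = A (Suc n)"
  unfolding qmult_def qF_def
  by (simp add: coeff_monom degree_monom_eq if_distrib[of "\<lambda>c. smult c _"] cong: if_cong)

lemma qsub_qE_qF_qD_0: "qsub qE (qF \<star> qD) 0 = 1"
  unfolding qsub_def qE_def qF_def qD_def qmult_def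
  by (simp add: monom_0 one_pCons)

lemma polynomial_process_qtriangular:
  "polynomial_process P \<Longrightarrow> 0 \<le> s \<Longrightarrow> s \<le> t \<Longrightarrow> qtriangular (P s t)"
  unfolding polynomial_process_def qtriangular_def by blast

lemma polynomial_process_degree:
  "polynomial_process P \<Longrightarrow> 0 \<le> s \<Longrightarrow> s \<le> t \<Longrightarrow> degree (P s t n) = n"
  using polynomial_process_qtriangular qtriangular_def by blast

lemma polynomial_process_comp:
  "polynomial_process P \<Longrightarrow> 0 \<le> s \<Longrightarrow> s \<le> t \<Longrightarrow> t \<le> u \<Longrightarrow> P s t \<star> P t u = P s u"
  unfolding polynomial_process_def by blast

lemma polynomial_process_0:
  assumes "polynomial_process P" "0 \<le> s" "s \<le> t"
  shows "P s t 0 = 1"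
proof -
  have "P s t \<star> qsub qE (qF \<star> qD) = qsub qE (qF \<star> qD)"
    using assms unfolding polynomial_process_def by blast
  moreover have "(P s t \<star> qsub qE (qF \<star> qD)) 0 = P s t 0"
    by (simp add: qmult_apply qapply_def qsub_qE_qF_qD_0)
  ultimately show ?thesis
    using qsub_qE_qF_qD_0 by metis
qed

lemma polynomial_process_diag:
  assumes "polynomial_process P" "0 \<le> t"
  shows "P t t = qE"
proof (rule qmult_left_cancel)
  show "qtriangular (P t t)"
    using polynomial_process_qtriangular[OF assms(1)] assms(2) by simp
  show "P t t \<star> P t t = P t t \<star> qE"
    using polynomial_process_comp[OF assms(1), of t t t] assms(2) by (simp add: qmult_qE_right)
qed

lemma harness_recursion:
  assumes "polynomial_process P" and "0 \<le> t"
    and "P 0 t \<star> qF = qadd qF (qscale t X) \<star> P 0 t"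
  shows "coeff (P 0 t (Suc n)) k =
    (\<Sum>j\<le>n. coeff (P 0 t n) j * (coeff (monom 1 (Suc j)) k + t * coeff (X j) k))"
proof -
  have "coeff (P 0 t (Suc n)) k = coeff ((qadd qF (qscale t X) \<star> P 0 t) n) k"
    using assms(3) by (simp flip: qmult_qF_right)
  also have "\<dots> = (\<Sum>j\<le>n. coeff (P 0 t n) j * (coeff (monom 1 (Suc j)) k + t * coeff (X j) k))"
    using polynomial_process_degree[OF assms(1), of 0 t n] assms(2)
    by (simp add: coeff_qmult[of _ n n] qadd_def qscale_def qF_def)
  finally show ?thesis .
qed

lemma harness_coeff_polynomial:
  assumes "polynomial_process P" and "harness P"
  shows "\<exists>p. \<forall>t\<ge>0. coeff (P 0 t n) k = poly p t"
proof -
  obtain X where X: "\<forall>t\<ge>0. P 0 t \<star> qF = qadd qF (qscale t X) \<star> P 0 t"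
    using assms(2) unfolding harness_def by blast
  show ?thesis
  proof (induction n arbitrary: k)
    case 0
    show ?case
      using polynomial_process_0[OF assms(1)] by (intro exI[of _ "[:coeff 1 k:]"]) simp
  next
    case (Suc n)
    then obtain f where f: "\<And>j t. t \<ge> 0 \<Longrightarrow> coeff (P 0 t n) j = poly (f j) t"
      by metis
    have "coeff (P 0 t (Suc n)) k =
        poly (\<Sum>j\<le>n. f j * [:coeff (monom 1 (Suc j)) k, coeff (X j) k:]) t" if "0 \<le> t" for t
      using that X by (simp add: harness_recursion[OF assms(1)] poly_sum f algebra_simps)
    then show ?case
      by blast
  qed
qed

definition coeff_poly :: "(real \<Rightarrow> real \<Rightarrow> qseq) \<Rightarrow> nat \<Rightarrow> nat \<Rightarrow> real poly" where
  "coeff_poly P n i = (SOME p. \<forall>t\<ge>0. coeff (P 0 t n) i = poly p t)"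

lemma poly_coeff_poly:
  assumes "polynomial_process P" "harness P" "0 \<le> t"
  shows "poly (coeff_poly P n i) t = coeff (P 0 t n) i"
proof -
  have "\<forall>t\<ge>0. coeff (P 0 t n) i = poly (coeff_poly P n i) t"
    unfolding coeff_poly_def by (rule someI_ex, rule harness_coeff_polynomial[OF assms(1,2)])
  then show ?thesis
    using assms(3) by simp
qed

lemma coeff_increment:
  assumes "polynomial_process P" "0 \<le> s" "s \<le> t"
  shows "coeff (P 0 t n) i - coeff (P 0 s n) i =
    (\<Sum>j\<le>n. coeff (P s t n - qE n) j * coeff (P 0 s j) i)"
proof -
  have "coeff (P 0 t n) i = coeff ((P 0 s \<star> P s t) n) i"
    using polynomial_process_comp[OF assms(1), of 0 s t] assms by simp
  also have "\<dots> = (\<Sum>j\<le>n. coeff (P s t n) j * coeff (P 0 s j) i)"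
    using polynomial_process_degree[OF assms] by (simp add: coeff_qmult[of _ n n])
  finally have "coeff (P 0 t n) i = (\<Sum>j\<le>n. coeff (P s t n) j * coeff (P 0 s j) i)" .
  moreover have "coeff (P 0 s n) i = (\<Sum>j\<le>n. coeff (qE n) j * coeff (P 0 s j) i)"
    by (simp add: qE_def coeff_monom if_distrib[of "\<lambda>c. c * _"] cong: if_cong)
  ultimately show ?thesis
    by (simp add: sum_subtractf[symmetric] algebra_simps)
qed

lemma tendsto_triangular_system:
  fixes c w :: "nat \<Rightarrow> 'a \<Rightarrow> real" and b :: "nat \<Rightarrow> nat \<Rightarrow> 'a \<Rightarrow> real"
  assumes system: "\<And>i. i \<le> n \<Longrightarrow> eventually (\<lambda>h. w i h = (\<Sum>j\<le>n. c j h * b j i h)) F"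
    and upper: "\<And>i j. j < i \<Longrightarrow> eventually (\<lambda>h. b j i h = 0) F"
    and b: "\<And>i j. (b j i \<longlongrightarrow> B j i) F" and diag: "\<And>j. j \<le> n \<Longrightarrow> B j j \<noteq> 0"
    and w: "\<And>i. (w i \<longlongrightarrow> W i) F"
    and "m \<le> n"
  shows "\<exists>L. (c m \<longlongrightarrow> L) F"
  using \<open>m \<le> n\<close>
proof (induction "n - m" arbitrary: m rule: less_induct)
  case less
  define Lc where "Lc j = (SOME L. (c j \<longlongrightarrow> L) F)" for j
  have Lc: "(c j \<longlongrightarrow> Lc j) F" if "m < j" "j \<le> n" for j
  proof -
    have "\<exists>L. (c j \<longlongrightarrow> L) F"
      by (rule less.hyps) (use that in auto)
    then show ?thesis
      unfolding Lc_def by (rule someI_ex)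
  qed
  let ?rest = "\<lambda>h. \<Sum>j\<in>{m<..n}. c j h * b j m h"
  have "eventually (\<lambda>h. b m m h \<noteq> 0) F"
    using b[of m m] diag[OF less.prems] by (rule tendsto_imp_eventually_ne)
  moreover have "eventually (\<lambda>h. \<forall>j\<in>{..<m}. b j m h = 0) F"
    by (rule eventually_ball_finite) (auto intro: upper)
  ultimately have solve: "eventually (\<lambda>h. c m h = (w m h - ?rest h) / b m m h) F"
    using system[OF less.prems]
  proof eventually_elim
    case (elim h)
    have "{..n} = {..<m} \<union> ({m} \<union> {m<..n})"
      using less.prems by auto
    then have "w m h = (\<Sum>j\<in>{..<m}. c j h * b j m h) + (\<Sum>j\<in>{m} \<union> {m<..n}. c j h * b j m h)"
      using elim(3) by (simp only:) (rule sum.union_disjoint, auto)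
    also have "(\<Sum>j\<in>{m} \<union> {m<..n}. c j h * b j m h) = c m h * b m m h + ?rest h"
      by (subst sum.union_disjoint) auto
    finally have "w m h = (\<Sum>j\<in>{..<m}. c j h * b j m h) + (c m h * b m m h + ?rest h)" .
    then show ?case
      using elim(1,2) by (simp add: field_simps)
  qed
  have "((\<lambda>h. (w m h - ?rest h) / b m m h) \<longlongrightarrow>
      (W m - (\<Sum>j\<in>{m<..n}. Lc j * B j m)) / B m m) F"
    using diag[OF less.prems] by (intro tendsto_intros w b Lc) auto
  then have "(c m \<longlongrightarrow> (W m - (\<Sum>j\<in>{m<..n}. Lc j * B j m)) / B m m) F"
    by (rule Lim_transform_eventually) (use solve in \<open>auto elim: eventually_mono\<close>)
  then show ?case ..
qed

lemma tendsto_left_difference_quotient_poly: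
  fixes p :: "real poly"
  shows "((\<lambda>h. (poly p t - poly p (t - h)) / h) \<longlongrightarrow> poly (pderiv p) t) (at_right 0)"
proof -
  have "((\<lambda>h. (poly p (t + h) - poly p t) / h) \<longlongrightarrow> poly (pderiv p) t) (at 0)"
    using poly_DERIV[of p t] unfolding DERIV_def .
  then have "((\<lambda>h. (poly p (t + h) - poly p t) / h) \<longlongrightarrow> poly (pderiv p) t) (filtermap uminus (at_right 0))"
    using at_left_minus[of 0] by (simp add: filterlim_at_split)
  then have "((\<lambda>h. (poly p (t - h) - poly p t) / - h) \<longlongrightarrow> poly (pderiv p) t) (at_right 0)"
    by (simp add: filterlim_filtermap)
  then show ?thesis
    by (simp add: minus_divide_left)
qed

lemma forward_equation:
  assumes pp: "polynomial_process P" and hs: "harness P" and t: "0 < t"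
  shows "poly (pderiv (coeff_poly P n i)) t = (\<Sum>j\<le>n. generator P t n j * coeff (P 0 t j) i)"
proof -
  define c where "c j h = coeff (P (t - h) t n - qE n) j / h" for j h
  define b where "b j i h = poly (coeff_poly P j i) (t - h)" for j i h
  define w where "w i h = (poly (coeff_poly P n i) t - poly (coeff_poly P n i) (t - h)) / h" for i h
  have near: "eventually (\<lambda>h. 0 < h \<and> h \<le> t) (at_right (0::real))"
    using t unfolding eventually_at_right_field by auto
  have system: "eventually (\<lambda>h. w i h = (\<Sum>j\<le>n. c j h * b j i h)) (at_right 0)" for i
    using near
  proof eventually_elim
    case (elim h)
    then show ?case
      using coeff_increment[OF pp, of "t - h" t n i] t
      by (simp add: w_def c_def b_def poly_coeff_poly[OF pp hs] sum_divide_distrib)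
  qed
  have upper: "eventually (\<lambda>h. b j i h = 0) (at_right 0)" if "j < i" for i j
    using near
  proof eventually_elim
    case (elim h)
    then show ?case
      using polynomial_process_degree[OF pp, of 0 "t - h" j] that
      by (simp add: b_def poly_coeff_poly[OF pp hs] coeff_eq_0)
  qed
  have b: "(b j i \<longlongrightarrow> poly (coeff_poly P j i) t) (at_right 0)" for j i
    unfolding b_def by (intro tendsto_eq_intros) auto
  have diag: "poly (coeff_poly P j j) t \<noteq> 0" for j
    using polynomial_process_qtriangular[OF pp, of 0 t] t unfolding qtriangular_def
    by (metis leading_coeff_0_iff less_eq_real_def poly_coeff_poly[OF pp hs])
  have w: "(w i \<longlongrightarrow> poly (pderiv (coeff_poly P n i)) t) (at_right 0)" for i
    unfolding w_def by (rule tendsto_left_difference_quotient_poly)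
  have c: "(c j \<longlongrightarrow> generator P t n j) (at_right 0)" if jn: "j \<le> n" for j
  proof -
    obtain L where L: "(c j \<longlongrightarrow> L) (at_right 0)"
      using tendsto_triangular_system[OF system upper b diag w jn] by blast
    moreover have "generator P t n j = Lim (at_right 0) (c j)"
      unfolding generator_def c_def ..
    ultimately show ?thesis
      using tendsto_Lim[OF trivial_limit_at_right_real] by metis
  qed
  have "((\<lambda>h. \<Sum>j\<le>n. c j h * b j i h) \<longlongrightarrow> (\<Sum>j\<le>n. generator P t n j * poly (coeff_poly P j i) t))
      (at_right 0)"
    by (intro tendsto_sum tendsto_mult c b) auto
  then have "(w i \<longlongrightarrow> (\<Sum>j\<le>n. generator P t n j * poly (coeff_poly P j i) t)) (at_right 0)"
    by (rule Lim_transform_eventually) (use system[of i] in \<open>auto elim: eventually_mono\<close>)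
  then have "poly (pderiv (coeff_poly P n i)) t = (\<Sum>j\<le>n. generator P t n j * poly (coeff_poly P j i) t)"
    by (rule tendsto_unique[OF trivial_limit_at_right_real w])
  then show ?thesis
    using t by (simp add: poly_coeff_poly[OF pp hs])
qed

lemma linear_ode_solution_eq_0:
  fixes D L a :: "real \<Rightarrow> real"
  assumes "0 \<le> T" and "D 0 = 0"
    and "continuous_on {0..T} D" and "continuous_on {0..T} L"
    and L_nonzero: "\<And>x. 0 \<le> x \<Longrightarrow> x \<le> T \<Longrightarrow> L x \<noteq> 0"
    and D': "\<And>x. 0 < x \<Longrightarrow> x < T \<Longrightarrow> (D has_real_derivative a x * D x) (at x)"
    and L': "\<And>x. 0 < x \<Longrightarrow> x < T \<Longrightarrow> (L has_real_derivative a x * L x) (at x)"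
  shows "D T = 0"
proof (cases "T = 0")
  case False
  then have "0 < T"
    using assms(1) by simp
  have "(\<lambda>x. D x / L x) T = (\<lambda>x. D x / L x) 0"
  proof (rule DERIV_isconst_end[OF \<open>0 < T\<close>])
    show "continuous_on {0..T} (\<lambda>x. D x / L x)"
      using assms(3,4) L_nonzero by (intro continuous_intros) auto
  next
    fix x assume x: "0 < x" "x < T"
    have "((\<lambda>x. D x / L x) has_real_derivative
        (a x * D x * L x - D x * (a x * L x)) / (L x * L x)) (at x)"
      using x by (intro DERIV_divide D' L' L_nonzero) auto
    then show "((\<lambda>x. D x / L x) has_real_derivative 0) (at x)"
      by (simp add: algebra_simps)
  qed
  then show ?thesis
    using assms(2) L_nonzero[of T] assms(1) by simp
qed (use assms(2) in simp)

lemma polynomial_process_from_0_unique: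
  assumes pp: "polynomial_process P" and pp': "polynomial_process P'"
    and hs: "harness P" and hs': "harness P'"
    and gen: "\<forall>t>0. generator P t = generator P' t"
    and "0 \<le> T"
  shows "P 0 T n = P' 0 T n"
  using \<open>0 \<le> T\<close>
proof (induction n arbitrary: T rule: less_induct)
  case (less n)
  show ?case
  proof (rule poly_eqI)
    fix k
    define D where "D = coeff_poly P n k - coeff_poly P' n k"
    define L where "L = coeff_poly P n n"
    let ?a = "\<lambda>x. generator P x n n"
    have sum_split: "(\<Sum>j\<le>n. f j) = (\<Sum>j<n. f j) + f n" for f :: "nat \<Rightarrow> real"
      by (simp add: lessThan_Suc_atMost[symmetric])
    have D_coeff: "poly D x = coeff (P 0 x n) k - coeff (P' 0 x n) k" if "0 \<le> x" for x
      using that by (simp add: D_def poly_coeff_poly[OF pp hs] poly_coeff_poly[OF pp' hs'])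
    have L_coeff: "poly L x = coeff (P 0 x n) n" if "0 \<le> x" for x
      using that by (simp add: L_def poly_coeff_poly[OF pp hs])
    have "poly D T = 0"
    proof (rule linear_ode_solution_eq_0[where D = "poly D" and L = "poly L" and a = ?a])
      show "poly D 0 = 0"
        using D_coeff[of 0] polynomial_process_diag[OF pp] polynomial_process_diag[OF pp'] by simp
      show "poly L x \<noteq> 0" if "0 \<le> x" "x \<le> T" for x
        using L_coeff[OF that(1)] polynomial_process_degree[OF pp, of 0 x n] that
        by (metis leading_coeff_0_iff order.refl polynomial_process_qtriangular[OF pp] qtriangular_def)
      fix x :: real assume x: "0 < x" "x < T"
      have "poly (pderiv D) x =
          (\<Sum>j\<le>n. generator P x n j * (coeff (P 0 x j) k - coeff (P' 0 x j) k))"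
        using forward_equation[OF pp hs, of x n k] forward_equation[OF pp' hs', of x n k] gen x
        by (simp add: D_def pderiv_diff sum_subtractf[symmetric] algebra_simps)
      also have "\<dots> = ?a x * poly D x"
        using less.IH x D_coeff[of x] by (simp add: sum_split)
      finally show "(poly D has_real_derivative ?a x * poly D x) (at x)"
        using poly_DERIV[of D x] by simp
      have "poly (pderiv L) x = (\<Sum>j\<le>n. generator P x n j * coeff (P 0 x j) n)"
        using forward_equation[OF pp hs x(1)] by (simp add: L_def)
      also have "\<dots> = ?a x * poly L x"
        using polynomial_process_degree[OF pp, of 0 x] x L_coeff[of x]
        by (simp add: sum_split coeff_eq_0)
      finally show "(poly L has_real_derivative ?a x * poly L x) (at x)"
        using poly_DERIV[of L x] by simp
    qed (use less.prems in \<open>auto intro: continuous_intros\<close>)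
    then show "coeff (P 0 T n) k = coeff (P' 0 T n) k"
      using D_coeff[OF less.prems] by simp
  qed
qed

theorem proposition2p3:
  fixes P P' :: "real \<Rightarrow> real \<Rightarrow> nat \<Rightarrow> real poly"
  assumes "polynomial_process P" and "polynomial_process P'"
    and "harness P" and "harness P'"
    and "\<forall>t>0. generator P t = generator P' t"
  shows "\<forall>s t. 0 \<le> s \<and> s \<le> t \<longrightarrow> P s t = P' s t"
proof (intro allI impI)
  fix s t :: real assume st: "0 \<le> s \<and> s \<le> t"
  have from_0: "P 0 x = P' 0 x" if "0 \<le> x" for x
    using polynomial_process_from_0_unique[OF assms that] by blast
  have "P 0 s \<star> P s t = P 0 t"
    using polynomial_process_comp[OF assms(1), of 0 s t] st by simp
  also have "\<dots> = P' 0 s \<star> P' s t"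
    using polynomial_process_comp[OF assms(2), of 0 s t] from_0 st by simp
  also have "\<dots> = P 0 s \<star> P' s t"
    using from_0 st by simp
  finally show "P s t = P' s t"
    using polynomial_process_qtriangular[OF assms(1), of 0 s] st qmult_left_cancel by blast
qed

end
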